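(* For every $\varepsilon>0$, the following algorithm \textsc{DP-AdvRand}$(\varepsilon)$ is $(\varepsilon,0)$-differentially private with respect to the multiset of constraints of a Max-$k$XOR instance with $m$ constraints on $n$ variables: (1) choose $s\in\{1,\dots,\lceil\log_2k\rceil\}$ uniformly at random and put each index of $[n]$ independently into $U$ with probability $p=2^{-s}$; let $F=[n]\setminus U$; (2) draw $x_F\in\{\pm1\}^F$ uniformly at random; (3) for each $j\in U$ let $\mathsf{Act}(j)$ be the set of constraints whose scope contains $j$ and no other index of $U$, let $\Lambda_j=\frac1{\sqrt m}\sum_{\ell\in\mathsf{Act}(j)}b_\ell\prod_{i\in S_\ell\setminus\{j\}}x_i$ (using the values $x_F$), and independently set $x_j=+1$ with probability $\frac{1+\tanh(\varepsilon'\Lambda_j)}2$ and $x_j=-1$ otherwise, where $\varepsilon'=\frac{\varepsilon\sqrt m}2$; (4) pick $r\in\{0,1,\dots,k\}$ uniformly, set $\eta=\cos(r\pi/k)/2$, and independently for each $j\in U$ flip $x_j\leftarrow-x_j$ with probability $(1-\eta)/2$; (5) output $x=(x_F,x_U)$.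
   Context: A Max-$k$XOR instance consists of $m$ constraints indexed by $\ell\in[m]$, each with a scope $S_\ell\subseteq[n]$ of size $k$ and a sign $b_\ell\in\{\pm1\}$, with predicate $P_\ell(x_{S_\ell})=\frac12+\frac{b_\ell}2\prod_{i\in S_\ell}x_i$; all scopes are assumed distinct as sets. Two instances are neighboring if one is obtained from the other by adding or removing one constraint. An algorithm $\mathcal M$ is $(\varepsilon,0)$-DP if $\Pr[\mathcal M(\Phi)\in T]\le e^\varepsilon\Pr[\mathcal M(\Phi')\in T]$ for all neighboring $\Phi,\Phi'$ and all output sets $T$. *)

theory Defs
  imports "HOL-Probability.Probability"
begin

text \<open>Variables are indexed by 0..<n (the paper's [n]); assignments are
  functions nat => int with values in {1,-1} on 0..<n and the default 1 elsewhere.\<close>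

type_synonym constr = "nat set \<times> int"
type_synonym kxor_inst = "constr multiset"

definition valid_instance :: "nat \<Rightarrow> nat \<Rightarrow> kxor_inst \<Rightarrow> bool" where
  "valid_instance n k \<Phi> \<longleftrightarrow>
     (\<forall>c \<in># \<Phi>. fst c \<subseteq> {0..<n} \<and> card (fst c) = k \<and> snd c \<in> {1, -1})
     \<and> (\<forall>S. count (image_mset fst \<Phi>) S \<le> 1)"

definition neighboring :: "kxor_inst \<Rightarrow> kxor_inst \<Rightarrow> bool" where
  "neighboring \<Phi> \<Phi>' \<longleftrightarrow> (\<exists>c. \<Phi>' = \<Phi> + {#c#} \<or> \<Phi> = \<Phi>' + {#c#})"

definition pure_DP :: "nat \<Rightarrow> nat \<Rightarrow> real \<Rightarrow> (kxor_inst \<Rightarrow> 'b pmf) \<Rightarrow> bool" where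
  "pure_DP n k \<epsilon> M \<longleftrightarrow>
     (\<forall>\<Phi> \<Phi>' T. valid_instance n k \<Phi> \<and> valid_instance n k \<Phi>' \<and> neighboring \<Phi> \<Phi>' \<longrightarrow>
        measure_pmf.prob (M \<Phi>) T \<le> exp \<epsilon> * measure_pmf.prob (M \<Phi>') T)"

definition sign_of :: "bool \<Rightarrow> int" where
  "sign_of b = (if b then 1 else -1)"

definition rademacher :: "int pmf" where
  "rademacher = map_pmf sign_of (bernoulli_pmf (1/2))"

text \<open>Lambda_j (unscaled by epsilon'), computed from the values x (only the
  values on F are used since scopes of active constraints meet U only in j).\<close>
definition Lam :: "kxor_inst \<Rightarrow> (nat \<Rightarrow> bool) \<Rightarrow> (nat \<Rightarrow> int) \<Rightarrow> nat \<Rightarrow> real" where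
  "Lam \<Phi> U x j = 1 / sqrt (real (size \<Phi>)) *
     (\<Sum>\<^sub># (image_mset (\<lambda>c. real_of_int (snd c) * (\<Prod>i \<in> fst c - {j}. real_of_int (x i)))
        (filter_mset (\<lambda>c. j \<in> fst c \<and> {i \<in> fst c. U i} = {j}) \<Phi>)))"

definition DP_AdvRand :: "nat \<Rightarrow> nat \<Rightarrow> real \<Rightarrow> kxor_inst \<Rightarrow> (nat \<Rightarrow> int) pmf" where
  "DP_AdvRand n k \<epsilon> \<Phi> =
    (let m = size \<Phi>; \<epsilon>' = \<epsilon> * sqrt (real m) / 2 in
     bind_pmf (pmf_of_set {1..nat \<lceil>log 2 (real k)\<rceil>}) (\<lambda>s.
     bind_pmf (Pi_pmf {0..<n} False (\<lambda>_. bernoulli_pmf (1 / 2 ^ s))) (\<lambda>U.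
     bind_pmf (Pi_pmf {i \<in> {0..<n}. \<not> U i} 1 (\<lambda>_. rademacher)) (\<lambda>xF.
     bind_pmf (Pi_pmf {j \<in> {0..<n}. U j} 1
        (\<lambda>j. map_pmf sign_of (bernoulli_pmf ((1 + tanh (\<epsilon>' * Lam \<Phi> U xF j)) / 2)))) (\<lambda>xU.
     bind_pmf (pmf_of_set {0..k}) (\<lambda>r.
     let \<eta> = cos (real r * pi / real k) / 2 in
     bind_pmf (Pi_pmf {j \<in> {0..<n}. U j} False (\<lambda>_. bernoulli_pmf ((1 - \<eta>) / 2))) (\<lambda>flip.
     return_pmf (\<lambda>i. if i < n then
                        (if U i then (if flip i then - xU i else xU i) else xF i)
                      else 1))))))))"

end

theory Submission
  imports Defs
begin

text \<open>Steps (1), (2) and (4) do not look at the instance, and the output is a fixed function of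
  their outcomes and of \<open>x\<^sub>U\<close>; so it suffices to compare the laws of \<open>x\<^sub>U\<close> for fixed \<open>U\<close>
  and \<open>x\<^sub>F\<close>. The normalisation of \<open>\<epsilon>'\<close> cancels the factor \<open>1/\<surd>m\<close> in \<open>\<Lambda>\<^sub>j\<close>, so
  \<open>\<epsilon>'\<Lambda>\<^sub>j\<close> is \<open>\<epsilon>/2\<close> times a sum of \<open>\<plusminus>1\<close> terms over the active constraints of \<open>j\<close>.
  A constraint is active for at most one \<open>j\<close>, so adding it moves at most one of these
  arguments, and by at most \<open>\<epsilon>/2\<close>. Since \<open>(1 + tanh t)/2 = 1/(1 + e\<^sup>-\<^sup>2\<^sup>t)\<close>, this changes
  the probability of either sign of \<open>x\<^sub>j\<close> by a factor at most \<open>e\<^sup>\<epsilon>\<close>, and all other coordinates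
  of \<open>x\<^sub>U\<close> keep their laws.\<close>

definition pmf_ratio_le :: "real \<Rightarrow> 'a pmf \<Rightarrow> 'a pmf \<Rightarrow> bool" where
  "pmf_ratio_le e M M' \<longleftrightarrow> (\<forall>x. pmf M x \<le> e * pmf M' x)"

lemma prob_le_if_pmf_ratio_le:
  assumes "pmf_ratio_le e M M'" "e \<ge> 0"
  shows "measure_pmf.prob M T \<le> e * measure_pmf.prob M' T"
proof -
  have "ennreal (measure_pmf.prob M T) = (\<integral>\<^sup>+ x. pmf M x \<partial>count_space T)"
    by (simp add: measure_pmf.emeasure_eq_measure[symmetric] nn_integral_pmf)
  also have "\<dots> \<le> (\<integral>\<^sup>+ x. ennreal e * pmf M' x \<partial>count_space T)"
    using assms by (intro nn_integral_mono) (auto simp: pmf_ratio_le_def ennreal_mult[symmetric])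
  also have "\<dots> = ennreal (e * measure_pmf.prob M' T)"
    using assms
    by (simp add: nn_integral_cmult nn_integral_pmf measure_pmf.emeasure_eq_measure ennreal_mult)
  finally show ?thesis
    using assms by (simp add: ennreal_le_iff)
qed

lemma pmf_ratio_le_bind_kernel:
  assumes "\<And>a. a \<in> set_pmf A \<Longrightarrow> pmf_ratio_le e (f a) (g a)" "e \<ge> 0"
  shows "pmf_ratio_le e (bind_pmf A f) (bind_pmf A g)"
  unfolding pmf_ratio_le_def
proof
  fix x
  have "ennreal (pmf (bind_pmf A f) x) = (\<integral>\<^sup>+a. pmf (f a) x \<partial>measure_pmf A)"
    by (rule ennreal_pmf_bind)
  also have "\<dots> \<le> (\<integral>\<^sup>+a. ennreal e * pmf (g a) x \<partial>measure_pmf A)"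
    using assms by (intro nn_integral_mono_AE)
      (auto simp: AE_measure_pmf_iff pmf_ratio_le_def ennreal_mult[symmetric])
  also have "\<dots> = ennreal (e * pmf (bind_pmf A g) x)"
    using assms by (simp add: nn_integral_cmult ennreal_pmf_bind ennreal_mult)
  finally show "pmf (bind_pmf A f) x \<le> e * pmf (bind_pmf A g) x"
    using assms by (simp add: ennreal_le_iff)
qed

lemma pmf_ratio_le_bind_post:
  assumes "pmf_ratio_le e M M'" "e \<ge> 0"
  shows "pmf_ratio_le e (bind_pmf M f) (bind_pmf M' f)"
  unfolding pmf_ratio_le_def
proof
  fix x
  have "ennreal (pmf (bind_pmf M f) x) = (\<integral>\<^sup>+a. ennreal (pmf M a) * pmf (f a) x \<partial>count_space UNIV)"
    by (simp add: ennreal_pmf_bind nn_integral_measure_pmf)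
  also have "\<dots> \<le> (\<integral>\<^sup>+a. ennreal e * (ennreal (pmf M' a) * pmf (f a) x) \<partial>count_space UNIV)"
  proof (intro nn_integral_mono)
    fix a
    have "ennreal (pmf M a) \<le> ennreal e * ennreal (pmf M' a)"
      using assms by (auto simp: pmf_ratio_le_def ennreal_mult[symmetric])
    then show "ennreal (pmf M a) * pmf (f a) x \<le> ennreal e * (ennreal (pmf M' a) * pmf (f a) x)"
      by (metis mult.assoc mult_right_mono zero_le)
  qed
  also have "\<dots> = ennreal (e * pmf (bind_pmf M' f) x)"
    using assms
    by (simp add: nn_integral_cmult nn_integral_measure_pmf ennreal_mult ennreal_pmf_bind)
  finally show "pmf (bind_pmf M f) x \<le> e * pmf (bind_pmf M' f) x"
    using assms by (simp add: ennreal_le_iff)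
qed

lemma pmf_ratio_le_Pi_pmf_one_coord:
  assumes "finite A" "\<And>i. i \<in> A \<Longrightarrow> i \<noteq> j \<Longrightarrow> f i = g i"
    and "pmf_ratio_le e (f j) (g j)" "e \<ge> 1"
  shows "pmf_ratio_le e (Pi_pmf A d f) (Pi_pmf A d g)"
  unfolding pmf_ratio_le_def
proof
  fix x
  have rest: "(\<Prod>i\<in>A-{j}. pmf (f i) (x i)) = (\<Prod>i\<in>A-{j}. pmf (g i) (x i))"
    using assms(2) by (intro prod.cong) auto
  have "(\<Prod>i\<in>A. pmf (f i) (x i)) \<le> e * (\<Prod>i\<in>A. pmf (g i) (x i))"
  proof (cases "j \<in> A")
    case False
    then have "(\<Prod>i\<in>A. pmf (f i) (x i)) = (\<Prod>i\<in>A. pmf (g i) (x i))"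
      using rest by simp
    moreover have "(\<Prod>i\<in>A. pmf (g i) (x i)) \<ge> 0"
      by (simp add: prod_nonneg)
    ultimately show ?thesis
      using assms(4) by (simp add: mult_le_cancel_right1)
  next
    case True
    have "(\<Prod>i\<in>A. pmf (f i) (x i)) = pmf (f j) (x j) * (\<Prod>i\<in>A-{j}. pmf (g i) (x i))"
      using assms(1) True rest by (simp add: prod.remove)
    also have "\<dots> \<le> e * pmf (g j) (x j) * (\<Prod>i\<in>A-{j}. pmf (g i) (x i))"
      using assms(3) by (intro mult_right_mono) (auto simp: pmf_ratio_le_def prod_nonneg)
    also have "\<dots> = e * (\<Prod>i\<in>A. pmf (g i) (x i))"
      using assms(1) True by (simp add: prod.remove)
    finally show ?thesis .
  qed
  then show "pmf (Pi_pmf A d f) x \<le> e * pmf (Pi_pmf A d g) x"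
    using assms(1,4) by (simp add: pmf_Pi prod_nonneg)
qed

lemma pmf_sign_of_bernoulli:
  assumes "0 \<le> p" "p \<le> 1"
  shows "pmf (map_pmf sign_of (bernoulli_pmf p)) y = (if y = 1 then p else if y = -1 then 1 - p else 0)"
proof (cases "y \<in> range sign_of")
  case True
  then obtain b where "y = sign_of b" by auto
  moreover have pmf_sign: "pmf (map_pmf sign_of (bernoulli_pmf p)) (sign_of b') = pmf (bernoulli_pmf p) b'"
    for b'
    by (rule pmf_map_inj') (auto simp: inj_def sign_of_def)
  ultimately show ?thesis
    using assms pmf_sign[of True] pmf_sign[of False] by (cases b) (simp_all add: sign_of_def)
next
  case False
  then have "y \<notin> {1, -1}"
    by (metis insert_iff singletonD sign_of_def rangeI)
  with False show ?thesis
    by (subst pmf_map_outside) auto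
qed

lemma one_plus_tanh_le:
  fixes a b :: real
  shows "1 + tanh a \<le> exp (2 * \<bar>a - b\<bar>) * (1 + tanh b)"
proof -
  have tanh_eq: "1 + tanh t = 2 / (1 + exp (-2 * t))" for t :: real
    using add_pos_pos[OF zero_less_one exp_gt_zero[of "-2 * t"]]
    by (simp add: tanh_real_altdef field_simps)
  have "1 + exp (-2 * b) \<le> exp (2 * \<bar>a - b\<bar>) + exp (2 * \<bar>a - b\<bar> - 2 * a)"
    using abs_ge_self[of "a - b"] by (intro add_mono) auto
  also have "\<dots> = exp (2 * \<bar>a - b\<bar>) * (1 + exp (-2 * a))"
    by (simp add: distrib_left exp_diff exp_minus field_simps)
  finally have "1 + exp (-2 * b) \<le> exp (2 * \<bar>a - b\<bar>) * (1 + exp (-2 * a))" .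
  then show ?thesis
    unfolding tanh_eq using add_pos_pos[OF zero_less_one exp_gt_zero]
    by (simp add: field_simps)
qed

lemma pmf_ratio_le_sign_of_tanh:
  fixes a b \<epsilon> :: real
  assumes "2 * \<bar>a - b\<bar> \<le> \<epsilon>"
  shows "pmf_ratio_le (exp \<epsilon>) (map_pmf sign_of (bernoulli_pmf ((1 + tanh a) / 2)))
                               (map_pmf sign_of (bernoulli_pmf ((1 + tanh b) / 2)))"
proof -
  have prob: "0 \<le> (1 + tanh t) / 2" "(1 + tanh t) / 2 \<le> 1" for t :: real
    using tanh_real_lt_1[of t] tanh_real_gt_neg1[of t] by auto
  have "1 + tanh t \<le> exp \<epsilon> * (1 + tanh s)" if "2 * \<bar>t - s\<bar> \<le> \<epsilon>" for t s :: real
    using one_plus_tanh_le[of t s] that tanh_real_gt_neg1[of s]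
    by (smt (verit) exp_le_cancel_iff mult_right_mono)
  from this[of a b] this[of "-a" "-b"] assms
  have "(1 + tanh a) / 2 \<le> exp \<epsilon> * ((1 + tanh b) / 2)"
    and "1 - (1 + tanh a) / 2 \<le> exp \<epsilon> * (1 - (1 + tanh b) / 2)"
    by (auto simp: tanh_minus field_simps abs_minus_commute)
  then show ?thesis
    unfolding pmf_ratio_le_def pmf_sign_of_bernoulli[OF prob] by auto
qed

definition active_sum :: "kxor_inst \<Rightarrow> (nat \<Rightarrow> bool) \<Rightarrow> (nat \<Rightarrow> int) \<Rightarrow> nat \<Rightarrow> real" where
  "active_sum \<Phi> U x j =
     \<Sum>\<^sub># (image_mset (\<lambda>c. real_of_int (snd c) * (\<Prod>i \<in> fst c - {j}. real_of_int (x i)))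
        (filter_mset (\<lambda>c. j \<in> fst c \<and> {i \<in> fst c. U i} = {j}) \<Phi>))"

lemma scaled_Lam_eq_active_sum:
  "\<epsilon> * sqrt (real (size \<Phi>)) / 2 * Lam \<Phi> U x j = \<epsilon> / 2 * active_sum \<Phi> U x j"
  by (cases "size \<Phi> = 0") (simp_all add: Lam_def active_sum_def)

lemma active_sum_add_mset:
  "active_sum (add_mset c \<Phi>) U x j = active_sum \<Phi> U x j +
     (if j \<in> fst c \<and> {i \<in> fst c. U i} = {j}
      then real_of_int (snd c) * (\<Prod>i \<in> fst c - {j}. real_of_int (x i)) else 0)"
  by (simp add: active_sum_def)

lemma abs_sign_prod_le_one:
  assumes "s \<in> {1, -1}" "\<And>i. x i \<in> {1, -1}"
  shows "\<bar>real_of_int s * (\<Prod>i \<in> S. real_of_int (x i))\<bar> \<le> 1"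
proof -
  have "\<bar>real_of_int (x i)\<bar> = 1" for i
    using assms(2)[of i] by auto
  then show ?thesis
    using assms(1) by (auto simp: abs_mult abs_prod)
qed

lemma set_pmf_Pi_rademacher:
  assumes "finite A" "x \<in> set_pmf (Pi_pmf A 1 (\<lambda>_. rademacher))"
  shows "x i \<in> {1, -1}"
proof -
  have "set_pmf rademacher = {1, -1}"
    by (auto simp: rademacher_def sign_of_def)
  then show ?thesis
    using set_Pi_pmf_subset'[OF assms(1), of 1 "\<lambda>_. rademacher"] assms(2)
    by (cases "i \<in> A") (auto simp: PiE_dflt_def)
qed

lemma DP_AdvRand_add_mset:
  assumes "\<Phi>' = add_mset c \<Phi> \<or> \<Phi> = add_mset c \<Phi>'" "snd c \<in> {1, -1}" "\<epsilon> > 0"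
  shows "pmf_ratio_le (exp \<epsilon>) (DP_AdvRand n k \<epsilon> \<Phi>) (DP_AdvRand n k \<epsilon> \<Phi>')"
  unfolding DP_AdvRand_def Let_def scaled_Lam_eq_active_sum
proof (intro pmf_ratio_le_bind_kernel pmf_ratio_le_bind_post)
  fix s U xF
  assume "xF \<in> set_pmf (Pi_pmf {i \<in> {0..<n}. \<not> U i} 1 (\<lambda>_. rademacher))"
  then have signs: "xF i \<in> {1, -1}" for i
    by (rule set_pmf_Pi_rademacher[rotated]) simp
  obtain j0 where j0: "\<And>j. j \<noteq> j0 \<Longrightarrow> \<not> (j \<in> fst c \<and> {i \<in> fst c. U i} = {j})"
    by (metis singleton_inject)
  have diff: "\<bar>active_sum \<Phi> U xF j - active_sum \<Phi>' U xF j\<bar> \<le> 1"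
    for j
    using assms(1) abs_sign_prod_le_one[OF assms(2) signs, where S = "fst c - {j}"]
    by (auto simp: active_sum_add_mset)
  have "2 * \<bar>\<epsilon> / 2 * active_sum \<Phi> U xF j - \<epsilon> / 2 * active_sum \<Phi>' U xF j\<bar> \<le> \<epsilon>" for j
    unfolding right_diff_distrib[symmetric] abs_mult
    using mult_left_mono[OF diff[of j], of \<epsilon>] assms(3) by simp
  moreover have "active_sum \<Phi> U xF j = active_sum \<Phi>' U xF j" if "j \<noteq> j0" for j
    using assms(1) j0[OF that] by (elim disjE) (simp_all only: active_sum_add_mset if_False)
  ultimately show "pmf_ratio_le (exp \<epsilon>)
     (Pi_pmf {j \<in> {0..<n}. U j} 1
        (\<lambda>j. map_pmf sign_of (bernoulli_pmf ((1 + tanh (\<epsilon> / 2 * active_sum \<Phi> U xF j)) / 2))))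
     (Pi_pmf {j \<in> {0..<n}. U j} 1
        (\<lambda>j. map_pmf sign_of (bernoulli_pmf ((1 + tanh (\<epsilon> / 2 * active_sum \<Phi>' U xF j)) / 2))))"
    using assms(3)
    by (intro pmf_ratio_le_Pi_pmf_one_coord[where j = j0] pmf_ratio_le_sign_of_tanh) auto
qed (use assms(3) in auto)

theorem theorem4p4:
  fixes n k :: nat and \<epsilon> :: real
  assumes "k \<ge> 2" and "\<epsilon> > 0"
  shows "pure_DP n k \<epsilon> (DP_AdvRand n k \<epsilon>)"
  unfolding pure_DP_def
proof (intro allI impI)
  fix \<Phi> \<Phi>' :: kxor_inst and T
  assume h: "valid_instance n k \<Phi> \<and> valid_instance n k \<Phi>' \<and> neighboring \<Phi> \<Phi>'"
  then obtain c where c: "\<Phi>' = add_mset c \<Phi> \<or> \<Phi> = add_mset c \<Phi>'"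
    by (auto simp: neighboring_def)
  moreover have "snd c \<in> {1, -1}"
    using c h by (auto simp: valid_instance_def)
  ultimately have "pmf_ratio_le (exp \<epsilon>) (DP_AdvRand n k \<epsilon> \<Phi>) (DP_AdvRand n k \<epsilon> \<Phi>')"
    using DP_AdvRand_add_mset assms(2) by blast
  then show "measure_pmf.prob (DP_AdvRand n k \<epsilon> \<Phi>) T \<le> exp \<epsilon> * measure_pmf.prob (DP_AdvRand n k \<epsilon> \<Phi>') T"
    by (rule prob_le_if_pmf_ratio_le) simp
qed

end
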